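(* Let $p$ be a prime and $r\in\mathbb{Z}$. Let $j\in\{0,1,\dots,p-1\}$ be the residue of $-r$ modulo $p$ and $K=\sum_{k=1}^{j}p^k$. Then for all integers $n\geq K$, \[ B_{n,r}\equiv B_{n-K}\pmod p. \]
   Context: $B_n$ is the $n$-th Bell number. For any integer $s$, the $s$-Bell numbers are defined by $\sum_{n\geq0}B_{n,s}\frac{t^n}{n!}=e^{e^t-1+st}$. *)

theory Defs
  imports "HOL-Computational_Algebra.Formal_Power_Series"
begin

definition sbell :: "nat \<Rightarrow> int \<Rightarrow> rat" where
  "sbell n s = fact n * fps_nth (fps_exp 1 oo (fps_exp 1 - 1 + fps_const (of_int s) * fps_X)) n"

definition bell :: "nat \<Rightarrow> rat" where
  "bell n = sbell n 0"

end

theory Submission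
  imports Defs "HOL-Computational_Algebra.Polynomial" "HOL-Number_Theory.Cong"
begin

unbundle fps_syntax

(* Let L be the additive map Z[x] -> Z with L(x^k) = B_k. Multiplying exponential generating
   functions gives B_{n,s} = L((x+s)^n), and the Bell recurrence says L(x f) = L(f(x+1)); hence
   L(ff_j f) = L(f(x+j)) for the falling factorial ff_j = x(x-1)...(x-j+1). Write f ~ g if
   L(f h) = L(g h) (mod p) for all h; this is a ring congruence. Since x^p - x = ff_p
   coefficientwise mod p (both are monic of degree p, and by Fermat they agree mod p at
   0, ..., p-1) and L(ff_p h) = L(h(x+p)) = L(h) (mod p), Touchard's congruence x^p ~ x + 1
   follows, and with the Frobenius map (x+c)^(p^k) ~ x+c+k. So for K = p + ... + p^j and
   r = -j (mod p),
     (x+r)^K ~ prod_{k=1..j} (x-j)^(p^k) ~ prod_{k=1..j} (x-j+k) = ff_j,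
     B_{n,r} = L((x+r)^K (x+r)^(n-K)) == L(ff_j (x+r)^(n-K)) = L((x+r+j)^(n-K)) == L(x^(n-K)) = B_{n-K},
   where == is congruence mod p.
   Below, L is bell_functional, ff_j is falling_poly j and ~ is bell_cong p. *)

section \<open>Bell numbers from their exponential generating function\<close>

lemma fps_ode_unique:
  fixes F G H :: "'a :: {idom, semiring_char_0} fps"
  assumes "fps_deriv F = F * H" "fps_deriv G = G * H" "F $ 0 = G $ 0"
  shows "F = G"
proof -
  have "F $ n = G $ n" for n
  proof (induction n rule: less_induct)
    case (less n)
    show ?case
    proof (cases n)
      case 0
      then show ?thesis using assms(3) by simp
    next
      case (Suc m)
      have "(F * H) $ m = (G * H) $ m"
        unfolding fps_mult_nth using less Suc by (intro sum.cong) auto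
      then have "fps_deriv F $ m = fps_deriv G $ m"
        using assms(1,2) by simp
      then have "of_nat (Suc m) * F $ Suc m = of_nat (Suc m) * G $ Suc m"
        by simp
      then show ?thesis using Suc by (simp del: of_nat_Suc)
    qed
  qed
  then show ?thesis by (simp add: fps_eq_iff)
qed

lemma fps_deriv_fps_exp_compose:
  fixes A :: "'a :: field_char_0 fps"
  assumes "A $ 0 = 0"
  shows "fps_deriv (fps_exp c oo A) = (fps_exp c oo A) * (fps_const c * fps_deriv A)"
proof -
  have "fps_deriv (fps_exp c oo A) = (fps_const c * fps_exp c oo A) * fps_deriv A"
    using assms by (simp add: fps_compose_deriv)
  also have "fps_const c * fps_exp c oo A = fps_const c * (fps_exp c oo A)"
    using assms by (simp add: fps_compose_mult_distrib)
  finally show ?thesis by (simp add: ac_simps)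
qed

lemma fps_exp_compose_add:
  fixes A B :: "'a :: field_char_0 fps"
  assumes "A $ 0 = 0" "B $ 0 = 0"
  shows "fps_exp c oo (A + B) = (fps_exp c oo A) * (fps_exp c oo B)"
proof (rule fps_ode_unique)
  show "fps_deriv (fps_exp c oo (A + B)) = (fps_exp c oo (A + B)) * (fps_const c * fps_deriv (A + B))"
    using assms by (intro fps_deriv_fps_exp_compose) simp
  show "fps_deriv ((fps_exp c oo A) * (fps_exp c oo B)) =
      (fps_exp c oo A) * (fps_exp c oo B) * (fps_const c * fps_deriv (A + B))"
    using assms by (simp add: fps_deriv_fps_exp_compose distrib_left distrib_right ac_simps)
qed (use assms in simp)

lemma fact_mult_fps_exp_nth:
  fixes F :: "'a :: field_char_0 fps"
  shows "fact n * (F * fps_exp c) $ n = (\<Sum>k\<le>n. of_nat (n choose k) * c ^ (n - k) * (fact k * F $ k))"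
  unfolding fps_mult_nth atLeast0AtMost sum_distrib_left
proof (intro sum.cong refl)
  fix k assume "k \<in> {..n}"
  then have "fact k * fact (n - k) * (n choose k) = fact n"
    by (intro binomial_fact_lemma) simp
  then have "(fact n :: 'a) = of_nat (fact k * fact (n - k) * (n choose k))"
    by simp
  moreover have "fps_exp c $ (n - k) = c ^ (n - k) / fact (n - k)"
    by simp
  ultimately show "fact n * (F $ k * fps_exp c $ (n - k)) = of_nat (n choose k) * c ^ (n - k) * (fact k * F $ k)"
    by (simp add: field_simps)
qed

lemma sbell_eq_sum: "sbell n s = (\<Sum>k\<le>n. of_nat (n choose k) * of_int s ^ (n - k) * bell k)"
proof -
  have "fps_exp 1 oo (fps_exp 1 - 1 + fps_const (of_int s) * fps_X) =
      (fps_exp 1 oo (fps_exp 1 - 1)) * (fps_exp (of_int s) :: rat fps)"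
    by (subst fps_exp_compose_add) simp_all
  moreover have "bell k = fact k * (fps_exp 1 oo (fps_exp 1 - 1)) $ k" for k
    by (simp add: bell_def sbell_def)
  ultimately show ?thesis
    by (simp add: sbell_def fact_mult_fps_exp_nth)
qed

lemma bell_Suc: "bell (Suc n) = (\<Sum>k\<le>n. of_nat (n choose k) * bell k)"
proof -
  define F :: "rat fps" where "F = fps_exp 1 oo (fps_exp 1 - 1)"
  have bell_F: "bell k = fact k * F $ k" for k
    by (simp add: bell_def sbell_def F_def)
  have "fps_deriv F = F * fps_exp 1"
    unfolding F_def by (subst fps_deriv_fps_exp_compose) simp_all
  then have "of_nat (Suc n) * F $ Suc n = (F * fps_exp 1) $ n"
    using fps_deriv_nth[of F n] by simp
  then have "bell (Suc n) = fact n * (F * fps_exp 1) $ n"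
    by (simp add: bell_F)
  then show ?thesis
    by (simp add: fact_mult_fps_exp_nth bell_F)
qed

fun bell_int :: "nat \<Rightarrow> int" where
  "bell_int 0 = 1"
| "bell_int (Suc n) = (\<Sum>k\<le>n. int (n choose k) * bell_int k)"

lemma of_int_bell_int: "of_int (bell_int n) = bell n"
  by (induction n rule: bell_int.induct) (simp_all add: bell_Suc, simp add: bell_def sbell_def)

section \<open>The Bell functional\<close>

lemma pcompose_power: "(f ^ n) \<circ>\<^sub>p q = (f \<circ>\<^sub>p q) ^ n"
  by (induction n) (simp_all add: pcompose_mult pcompose_1)

definition bell_functional :: "int poly \<Rightarrow> int" where
  "bell_functional f = (\<Sum>k\<le>degree f. coeff f k * bell_int k)"

lemma bell_functional_eq_sum:
  "degree f \<le> N \<Longrightarrow> bell_functional f = (\<Sum>k\<le>N. coeff f k * bell_int k)"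
  unfolding bell_functional_def
  by (rule sum.mono_neutral_left) (auto simp: coeff_eq_0)

lemma bell_functional_add: "bell_functional (f + g) = bell_functional f + bell_functional g"
proof -
  define N where "N = max (degree f) (degree g)"
  have "degree (f + g) \<le> N" "degree f \<le> N" "degree g \<le> N"
    unfolding N_def by (auto intro: degree_add_le)
  then show ?thesis
    by (simp add: bell_functional_eq_sum sum.distrib algebra_simps)
qed

lemma bell_functional_smult: "bell_functional (smult c f) = c * bell_functional f"
  using bell_functional_eq_sum[OF degree_smult_le, of c f]
  by (simp add: bell_functional_def sum_distrib_left mult.assoc)

lemma bell_functional_sum: "bell_functional (\<Sum>i\<in>A. f i) = (\<Sum>i\<in>A. bell_functional (f i))"
  by (induction A rule: infinite_finite_induct)
    (simp_all add: bell_functional_add bell_functional_def[of 0])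

lemma bell_functional_monom: "bell_functional (monom c n) = c * bell_int n"
  using bell_functional_eq_sum[OF degree_monom_le, of c n]
  by (simp add: if_distrib[where f = "\<lambda>a. a * _"] cong: if_cong)

lemma bell_functional_linear_power:
  "bell_functional ([:c, 1:] ^ n) = (\<Sum>k\<le>n. int (n choose k) * c ^ (n - k) * bell_int k)"
proof -
  have "[:c, 1:] ^ n = (monom 1 1 + [:c:]) ^ n"
    by (simp add: monom_Suc monom_0)
  also have "\<dots> = (\<Sum>k\<le>n. monom (int (n choose k) * c ^ (n - k)) k)"
    unfolding binomial_ring
    by (intro sum.cong refl) (simp add: monom_power of_nat_poly poly_const_pow smult_monom mult.commute)
  finally show ?thesis by (simp add: bell_functional_sum bell_functional_monom)
qed

lemma sbell_eq_bell_functional: "sbell n s = of_int (bell_functional ([:s, 1:] ^ n))"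
  by (simp add: sbell_eq_sum bell_functional_linear_power of_int_bell_int)

lemma bell_functional_mult_X: "bell_functional ([:0, 1:] * f) = bell_functional (f \<circ>\<^sub>p [:1, 1:])"
proof -
  have f_eq: "f = (\<Sum>k\<le>degree f. monom (coeff f k) k)"
    by (rule poly_as_sum_of_monoms[symmetric])
  have "bell_functional ([:0, 1:] * f) = (\<Sum>k\<le>degree f. coeff f k * bell_int (Suc k))"
    by (subst f_eq) (simp add: sum_distrib_left bell_functional_sum bell_functional_monom flip: monom_Suc)
  also have "\<dots> = (\<Sum>k\<le>degree f. coeff f k * bell_functional ([:1, 1:] ^ k))"
    by (simp add: bell_functional_linear_power)
  also have "\<dots> = bell_functional (f \<circ>\<^sub>p [:1, 1:])"
    by (subst (2) f_eq) (simp add: monom_altdef pcompose_sum pcompose_smult pcompose_power pcompose_pCons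
        bell_functional_sum bell_functional_smult)
  finally show ?thesis .
qed

definition falling_poly :: "nat \<Rightarrow> int poly" where
  "falling_poly j = (\<Prod>i<j. [:- int i, 1:])"

lemma degree_falling_poly [simp]: "degree (falling_poly j) = j"
  by (simp add: falling_poly_def degree_prod_sum_eq)

lemma coeff_falling_poly_self [simp]: "coeff (falling_poly j) j = 1"
  using lead_coeff_prod[of "\<lambda>i. [:- int i, 1:]" "{..<j}"] degree_falling_poly[of j]
  by (simp add: falling_poly_def)

lemma bell_functional_falling_poly_mult:
  "bell_functional (falling_poly j * f) = bell_functional (f \<circ>\<^sub>p [:int j, 1:])"
proof (induction j arbitrary: f)
  case 0
  then show ?case by (simp add: falling_poly_def)
next
  case (Suc j)
  have shift: "[:- int j, 1:] \<circ>\<^sub>p [:int j, 1:] = [:0, 1:]"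
    by (simp add: pcompose_pCons)
  have "bell_functional (falling_poly (Suc j) * f) = bell_functional (falling_poly j * ([:- int j, 1:] * f))"
    by (simp add: falling_poly_def algebra_simps)
  also have "\<dots> = bell_functional ([:0, 1:] * (f \<circ>\<^sub>p [:int j, 1:]))"
    by (simp only: Suc.IH pcompose_mult shift)
  also have "\<dots> = bell_functional ((f \<circ>\<^sub>p [:int j, 1:]) \<circ>\<^sub>p [:1, 1:])"
    by (rule bell_functional_mult_X)
  also have "\<dots> = bell_functional (f \<circ>\<^sub>p [:int (Suc j), 1:])"
    by (simp add: pcompose_pCons add.commute flip: pcompose_assoc)
  finally show ?case .
qed

section \<open>Polynomial congruences modulo a prime\<close>

lemma prime_dvd_poly_if_dvd_values:
  fixes g :: "int poly"
  assumes "prime p" "degree g < n" "n \<le> p" "\<And>a. a < n \<Longrightarrow> int p dvd poly g (int a)"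
  shows "of_nat p dvd g"
  using assms(2-4)
proof (induction n arbitrary: g)
  case 0
  then show ?case by simp
next
  case (Suc n)
  define h where "h = synthetic_div g (int n)"
  have g_eq: "g = [:- int n, 1:] * h + [:poly g (int n):]"
    unfolding h_def by (rule synthetic_div_correct'[symmetric])
  have "of_nat p dvd h"
  proof (cases "degree g = 0")
    case True
    then have "h = 0"
      by (simp add: h_def synthetic_div_eq_0_iff)
    then show ?thesis by simp
  next
    case False
    have "int p dvd poly h (int a)" if "a < n" for a
    proof -
      have "poly g (int a) = (int a - int n) * poly h (int a) + poly g (int n)"
        by (subst g_eq) (simp add: algebra_simps)
      then have "int p dvd (int a - int n) * poly h (int a)"
        using Suc.prems(3)[of a] Suc.prems(3)[of n] that by (metis add_diff_cancel_right' dvd_diff less_SucI lessI)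
      moreover have "\<not> int p dvd (int a - int n)"
      proof
        assume "int p dvd (int a - int n)"
        then have "int p dvd (int n - int a)"
          by (simp add: dvd_diff_commute)
        then show False
          using zdvd_not_zless[of "int n - int a" "int p"] that Suc.prems(2) by simp
      qed
      ultimately show ?thesis
        using assms(1) by (simp add: prime_dvd_mult_iff)
    qed
    moreover have "degree h < n"
      using False Suc.prems(1) by (simp add: h_def degree_synthetic_div)
    ultimately show ?thesis
      using Suc.IH Suc.prems(2) by simp
  qed
  moreover have "of_nat p dvd [:poly g (int n):]"
    using Suc.prems(3)[of n] by (simp add: of_nat_poly)
  ultimately show ?case
    by (subst g_eq) (intro dvd_add dvd_mult)
qed

lemma prime_dvd_power_add_diff:
  fixes a b :: "'a :: comm_ring_1"
  assumes "prime p"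
  shows "of_nat p dvd (a + b) ^ p - (a ^ p + b ^ p)"
proof -
  define T where "T k = of_nat (p choose k) * a ^ k * b ^ (p - k)" for k
  have "p \<noteq> 0"
    using assms by auto
  then have "{..p} = insert 0 (insert p {1..<p})"
    by auto
  then have "(a + b) ^ p = T 0 + T p + (\<Sum>k\<in>{1..<p}. T k)"
    using \<open>p \<noteq> 0\<close> by (simp add: binomial_ring T_def)
  moreover have "of_nat p dvd (\<Sum>k\<in>{1..<p}. T k)"
  proof (rule dvd_sum)
    fix k assume "k \<in> {1..<p}"
    then have "p dvd p choose k"
      using assms by (intro dvd_choose_prime) auto
    then obtain q where "p choose k = p * q" ..
    then show "of_nat p dvd T k"
      by (simp add: T_def mult.assoc)
  qed
  ultimately show ?thesis
    by (simp add: T_def)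
qed

lemma fermat_little_int:
  fixes c :: int
  assumes "prime p"
  shows "[c ^ p = c] (mod int p)"
proof -
  have nat_case: "[int a ^ p = int a] (mod int p)" for a :: nat
  proof (induction a)
    case 0
    then show ?case
      using assms by (simp add: zero_power prime_gt_0_nat)
  next
    case (Suc a)
    have "[(int a + 1) ^ p = int a ^ p + 1] (mod int p)"
      using prime_dvd_power_add_diff[OF assms, of "int a" 1] by (simp add: cong_iff_dvd_diff)
    moreover have "[int a ^ p + 1 = int a + 1] (mod int p)"
      using Suc.IH by (rule cong_add) simp
    ultimately show ?case
      by (simp add: cong_trans add.commute)
  qed
  have "[c = int (nat (c mod int p))] (mod int p)"
    using assms by (simp add: prime_gt_0_nat cong_sym)
  then show ?thesis
    using nat_case by (metis cong_pow cong_sym cong_trans)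
qed

lemma falling_poly_prime_cong:
  assumes "prime p"
  shows "of_nat p dvd [:0, 1:] ^ p - (falling_poly p + [:0, 1:])"
proof (rule prime_dvd_poly_if_dvd_values[OF assms _ order.refl])
  have "p \<ge> 2"
    using assms by (rule prime_ge_2_nat)
  have X_power: "[:0, 1:] ^ p = (monom 1 p :: int poly)"
    by (simp add: monom_altdef)
  show "degree ([:0, 1:] ^ p - (falling_poly p + [:0, 1:])) < p"
  proof (rule degree_lessI)
    show "\<forall>k\<ge>p. coeff ([:0, 1:] ^ p - (falling_poly p + [:0, 1:])) k = 0"
    proof (intro allI impI)
      fix k assume "p \<le> k"
      then show "coeff ([:0, 1:] ^ p - (falling_poly p + [:0, 1:])) k = 0"
        using \<open>p \<ge> 2\<close> by (cases "k = p") (simp_all add: X_power coeff_eq_0 coeff_pCons')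
    qed
  qed (use \<open>p \<ge> 2\<close> in simp)
  show "int p dvd poly ([:0, 1:] ^ p - (falling_poly p + [:0, 1:])) (int a)" if "a < p" for a
  proof -
    have "poly (falling_poly p) (int a) = 0"
      using that by (auto simp: falling_poly_def poly_prod)
    then show ?thesis
      using fermat_little_int[OF assms, of "int a"] by (simp add: cong_iff_dvd_diff)
  qed
qed

section \<open>Touchard's congruence and its iterates\<close>

definition bell_cong :: "nat \<Rightarrow> int poly \<Rightarrow> int poly \<Rightarrow> bool" where
  "bell_cong p f g \<longleftrightarrow> (\<forall>h. [bell_functional (f * h) = bell_functional (g * h)] (mod int p))"

lemma bell_cong_refl [simp]: "bell_cong p f f"
  by (simp add: bell_cong_def)

lemma bell_cong_bell_functional:
  "bell_cong p f g \<Longrightarrow> [bell_functional f = bell_functional g] (mod int p)"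
  unfolding bell_cong_def by (metis mult_1_right)

lemma bell_cong_trans [trans]: "bell_cong p f g \<Longrightarrow> bell_cong p g h \<Longrightarrow> bell_cong p f h"
  unfolding bell_cong_def by (blast intro: cong_trans)

lemma bell_cong_add:
  "bell_cong p f1 g1 \<Longrightarrow> bell_cong p f2 g2 \<Longrightarrow> bell_cong p (f1 + f2) (g1 + g2)"
  unfolding bell_cong_def by (simp add: distrib_right bell_functional_add cong_add)

lemma bell_cong_mult:
  assumes "bell_cong p f1 g1" "bell_cong p f2 g2"
  shows "bell_cong p (f1 * f2) (g1 * g2)"
  unfolding bell_cong_def
proof
  fix h
  have "[bell_functional (f1 * (f2 * h)) = bell_functional (g1 * (f2 * h))] (mod int p)"
    using assms(1) by (simp add: bell_cong_def)
  moreover have "[bell_functional (f2 * (g1 * h)) = bell_functional (g2 * (g1 * h))] (mod int p)"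
    using assms(2) by (simp add: bell_cong_def)
  ultimately show "[bell_functional (f1 * f2 * h) = bell_functional (g1 * g2 * h)] (mod int p)"
    by (metis cong_trans mult.assoc mult.left_commute)
qed

lemma bell_cong_power: "bell_cong p f g \<Longrightarrow> bell_cong p (f ^ n) (g ^ n)"
  by (induction n) (simp_all add: bell_cong_mult)

lemma bell_cong_prod:
  "(\<And>i. i \<in> A \<Longrightarrow> bell_cong p (f i) (g i)) \<Longrightarrow> bell_cong p (\<Prod>i\<in>A. f i) (\<Prod>i\<in>A. g i)"
  by (induction A rule: infinite_finite_induct) (simp_all add: bell_cong_mult)

lemma bell_cong_pcompose: "bell_cong p q1 q2 \<Longrightarrow> bell_cong p (f \<circ>\<^sub>p q1) (f \<circ>\<^sub>p q2)"
  by (induction f) (simp_all add: pcompose_pCons bell_cong_add bell_cong_mult)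

lemma bell_cong_if_dvd:
  assumes "of_nat p dvd f - g"
  shows "bell_cong p f g"
  unfolding bell_cong_def
proof
  fix h
  obtain q where "f - g = of_nat p * q"
    using assms ..
  then have "f * h = g * h + smult (int p) (q * h)"
    by (simp add: of_nat_poly algebra_simps)
  then show "[bell_functional (f * h) = bell_functional (g * h)] (mod int p)"
    by (simp add: bell_functional_add bell_functional_smult cong_iff_dvd_diff)
qed

lemma bell_cong_linear: "[a = b] (mod int p) \<Longrightarrow> bell_cong p [:a, 1:] [:b, 1:]"
  by (rule bell_cong_if_dvd) (simp add: of_nat_poly cong_iff_dvd_diff)

lemma bell_cong_falling_poly: "bell_cong p (falling_poly p) 1"
  unfolding bell_cong_def
proof
  fix h
  have "[bell_functional (h \<circ>\<^sub>p [:int p, 1:]) = bell_functional (h \<circ>\<^sub>p [:0, 1:])] (mod int p)"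
    by (intro bell_cong_bell_functional bell_cong_pcompose bell_cong_linear) (simp add: cong_def)
  then show "[bell_functional (falling_poly p * h) = bell_functional (1 * h)] (mod int p)"
    by (simp add: bell_functional_falling_poly_mult)
qed

theorem touchard_bell_cong:
  assumes "prime p"
  shows "bell_cong p ([:0, 1:] ^ p) [:1, 1:]"
proof -
  have "bell_cong p ([:0, 1:] ^ p) (falling_poly p + [:0, 1:])"
    using falling_poly_prime_cong[OF assms] by (rule bell_cong_if_dvd)
  also have "bell_cong p \<dots> (1 + [:0, 1:])"
    by (intro bell_cong_add bell_cong_falling_poly bell_cong_refl)
  also have "1 + [:0, 1:] = ([:1, 1:] :: int poly)"
    by (simp add: one_pCons)
  finally show ?thesis .
qed

lemma bell_cong_linear_power_prime:
  assumes "prime p"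
  shows "bell_cong p ([:c, 1:] ^ p) [:c + 1, 1:]"
proof -
  have "bell_cong p ([:c, 1:] ^ p) ([:0, 1:] ^ p + [:c:] ^ p)"
    using prime_dvd_power_add_diff[OF assms, of "[:0, 1:]" "[:c:]"] by (simp add: bell_cong_if_dvd)
  also have "bell_cong p \<dots> ([:0, 1:] ^ p + [:c:])"
    using fermat_little_int[OF assms, of c]
    by (intro bell_cong_add bell_cong_refl bell_cong_if_dvd)
      (simp add: of_nat_poly poly_const_pow cong_iff_dvd_diff)
  also have "bell_cong p \<dots> ([:1, 1:] + [:c:])"
    by (intro bell_cong_add touchard_bell_cong assms bell_cong_refl)
  finally show ?thesis
    by (simp add: add.commute)
qed

lemma bell_cong_linear_power_prime_power:
  assumes "prime p"
  shows "bell_cong p ([:c, 1:] ^ (p ^ k)) [:c + int k, 1:]"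
proof (induction k)
  case 0
  then show ?case by simp
next
  case (Suc k)
  have "[:c, 1:] ^ (p ^ Suc k) = ([:c, 1:] ^ (p ^ k)) ^ p"
    by (simp only: power_Suc2 power_mult)
  also have "bell_cong p \<dots> ([:c + int k, 1:] ^ p)"
    using Suc.IH by (rule bell_cong_power)
  also have "bell_cong p \<dots> [:c + int (Suc k), 1:]"
    using bell_cong_linear_power_prime[OF assms, of "c + int k"] by (simp add: ac_simps)
  finally show ?case .
qed

lemma bell_cong_power_sum_falling_poly:
  assumes "prime p"
  shows "bell_cong p ([:- int j, 1:] ^ (\<Sum>k=1..j. p ^ k)) (falling_poly j)"
proof -
  have "[:- int j, 1:] ^ (\<Sum>k=1..j. p ^ k) = (\<Prod>k=1..j. [:- int j, 1:] ^ p ^ k)"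
    by (rule power_sum)
  also have "bell_cong p \<dots> (\<Prod>k=1..j. [:- int j + int k, 1:])"
    using assms by (intro bell_cong_prod bell_cong_linear_power_prime_power)
  also have "(\<Prod>k=1..j. [:- int j + int k, 1:]) = falling_poly j"
    unfolding falling_poly_def
    by (rule prod.reindex_bij_witness[of _ "\<lambda>i. j - i" "\<lambda>k. j - k"]) auto
  finally show ?thesis .
qed

lemma bell_functional_shifted_power_cong:
  assumes "prime p" "[r = - int j] (mod int p)" "(\<Sum>k=1..j. p ^ k) \<le> n"
  shows "[bell_functional ([:r, 1:] ^ n) = bell_functional ([:0, 1:] ^ (n - (\<Sum>k=1..j. p ^ k)))] (mod int p)"
proof -
  define K where "K = (\<Sum>k=1..j. p ^ k)"
  have "bell_cong p ([:r, 1:] ^ K) ([:- int j, 1:] ^ K)"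
    using assms(2) by (intro bell_cong_power bell_cong_linear)
  also have "bell_cong p \<dots> (falling_poly j)"
    unfolding K_def using assms(1) by (rule bell_cong_power_sum_falling_poly)
  finally have "[bell_functional ([:r, 1:] ^ K * [:r, 1:] ^ (n - K)) =
      bell_functional (falling_poly j * [:r, 1:] ^ (n - K))] (mod int p)"
    unfolding bell_cong_def by blast
  also have "bell_functional (falling_poly j * [:r, 1:] ^ (n - K)) =
      bell_functional ([:r + int j, 1:] ^ (n - K))"
    by (simp add: bell_functional_falling_poly_mult pcompose_power pcompose_pCons)
  also have "[\<dots> = bell_functional ([:0, 1:] ^ (n - K))] (mod int p)"
    using assms(2) by (intro bell_cong_bell_functional bell_cong_power bell_cong_linear)
      (simp add: cong_iff_dvd_diff)
  finally show ?thesis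
    using assms(3) by (simp add: K_def flip: power_add)
qed

theorem corollary5:
  fixes p :: nat and r :: int and n :: nat
  assumes "prime p"
    and "n \<ge> (\<Sum>k = 1..nat ((- r) mod int p). p ^ k)"
  shows "\<exists>m::int. sbell n r - bell (n - (\<Sum>k = 1..nat ((- r) mod int p). p ^ k)) = of_int (int p * m)"
proof -
  define j where "j = nat ((- r) mod int p)"
  define K where "K = (\<Sum>k = 1..j. p ^ k)"
  have "int j = (- r) mod int p"
    using assms(1) by (simp add: j_def prime_gt_0_nat)
  then have "[r = - int j] (mod int p)"
    by (metis cong_minus_minus_iff cong_mod_right cong_refl minus_minus)
  then have "int p dvd bell_functional ([:r, 1:] ^ n) - bell_functional ([:0, 1:] ^ (n - K))"
    using bell_functional_shifted_power_cong[OF assms(1)] assms(2)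
    by (simp add: K_def j_def cong_iff_dvd_diff)
  then obtain m where
    "bell_functional ([:r, 1:] ^ n) - bell_functional ([:0, 1:] ^ (n - K)) = int p * m" ..
  then have "sbell n r - bell (n - K) = of_int (int p * m)"
    by (simp add: sbell_eq_bell_functional bell_def flip: of_int_diff)
  then show ?thesis
    unfolding K_def j_def ..
qed

end
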